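(* Let $L=K_1\cup\dots\cup K_n$ be an oriented, ordered link with a surface system $\Sigma$. Let $\{b_K\}$ and $\{b_K'\}$ be two collections of base points, one on each component $K$ of $L$ (away from the intersection points of $K$ with the other surfaces), and let $m,m'\in W$ be the associated elements. Then \[m'-m\in\operatorname{span}\{v_{s,r}\mid s\neq r\},\qquad v_{s,r}=\sum_{i=1}^n\operatorname{lk}(K_i,K_r)X^{[isr]}.\]
   Context: A surface system for $L$ is a collection of embedded compact oriented surfaces $\Sigma_i\subset S^3$ with $\partial\Sigma_i=K_i$, intersecting transversally and in at most triple points. Given base points, $\widetilde w_k$ is the word in letters $\{1,\dots,n\}\times\{\pm1\}$ obtained by reading, along $K_k$ in the positive direction from its base point, the letter $i^{\varepsilon}$ for each intersection point of $K_k$ with $\Sigma_i$ ($i\ne k$), $\varepsilon$ the intersection sign. For $w=s_1^{\varepsilon_1}\cdots s_m^{\varepsilon_m}$, $e_{rs}(w)=\sum_{p<q,\,s_p=r,\,s_q=s}\varepsilon_p\varepsilon_q$. For distinct $i,j,k$, $m_{ijk}=e_{ij}(\widetilde w_k)+e_{jk}(\widetilde w_i)+e_{ki}(\widetilde w_j)$. $W=\bigwedge^3\mathbb{Z}\langle X^1,\dots,X^n\rangle$, $X^{[ijk]}=X^i\wedge X^j\wedge X^k$, and $m=\sum_{i<j<k}m_{ijk}X^{[ijk]}$ (similarly $m'$). *)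

theory Defs
  imports Main
begin

text \<open>Combinatorial data of a surface system: for each component k the word
  w_k is a list of letters (i, eps), i the index of the surface Sigma_i met, eps = +1/-1
  the intersection sign, read along K_k from the base point.\<close>

type_synonym word = "(nat \<times> int) list"

definition wf_words :: "nat \<Rightarrow> (nat \<Rightarrow> word) \<Rightarrow> bool" where
  "wf_words n ws \<longleftrightarrow> (\<forall>k\<in>{1..n}. \<forall>x\<in>set (ws k).
      fst x \<in> {1..n} \<and> fst x \<noteq> k \<and> (snd x = 1 \<or> snd x = -1))"

definition e_rs :: "nat \<Rightarrow> nat \<Rightarrow> word \<Rightarrow> int" where
  "e_rs r s w = (\<Sum>p<length w. \<Sum>q<length w.
      if p < q \<and> fst (w ! p) = r \<and> fst (w ! q) = s then snd (w ! p) * snd (w ! q) else 0)"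

definition m_ijk :: "(nat \<Rightarrow> word) \<Rightarrow> nat \<Rightarrow> nat \<Rightarrow> nat \<Rightarrow> int" where
  "m_ijk ws i j k = e_rs i j (ws k) + e_rs j k (ws i) + e_rs k i (ws j)"

text \<open>Linking number lk(K_i,K_r), the algebraic intersection number of K_r with Sigma_i,
  i.e. the signed count of letters i in w_r.\<close>
definition lk :: "(nat \<Rightarrow> word) \<Rightarrow> nat \<Rightarrow> nat \<Rightarrow> int" where
  "lk ws i r = (\<Sum>x\<leftarrow>ws r. if fst x = i then snd x else 0)"

text \<open>Elements of W = Lambda^3 Z<X^1..X^n> are represented by their coefficient functions
  on the basis X^[abc], a<b<c (value 0 on non-increasing triples).
  X3 i j k is the coefficient function of X^i \<and> X^j \<and> X^k.\<close>
definition X3 :: "nat \<Rightarrow> nat \<Rightarrow> nat \<Rightarrow> (nat \<Rightarrow> nat \<Rightarrow> nat \<Rightarrow> int)" where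
  "X3 i j k = (\<lambda>a b c. if a < b \<and> b < c \<and> {i, j, k} = {a, b, c}
      then sgn ((int j - int i) * (int k - int i) * (int k - int j)) else 0)"

definition mvec :: "nat \<Rightarrow> (nat \<Rightarrow> word) \<Rightarrow> (nat \<Rightarrow> nat \<Rightarrow> nat \<Rightarrow> int)" where
  "mvec n ws = (\<lambda>a b c. \<Sum>i\<in>{1..n}. \<Sum>j\<in>{1..n}. \<Sum>k\<in>{1..n}.
      if i < j \<and> j < k then m_ijk ws i j k * X3 i j k a b c else 0)"

definition vsr :: "nat \<Rightarrow> (nat \<Rightarrow> word) \<Rightarrow> nat \<Rightarrow> nat \<Rightarrow> (nat \<Rightarrow> nat \<Rightarrow> nat \<Rightarrow> int)" where
  "vsr n ws s r = (\<lambda>a b c. \<Sum>i\<in>{1..n}. lk ws i r * X3 i s r a b c)"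

end

theory Submission
  imports Defs
begin

text \<open>Moving the base point of K_r forward along an arc u splits the word as w_r = u v and
  replaces it by v u. Since e_{xy}(u v) = e_{xy}(u) + e_{xy}(v) + c_x(u) c_y(v), where c_x counts
  the letters x with their signs, the swap changes e_{xy}(w_r) by c_y(u) c_x(w_r) - c_x(u) c_y(w_r),
  and c_x(w_r) = lk(K_x, K_r). Collecting these changes in the m_{ijk} shows that the move adds
  exactly the combination of the v_{s,r} with coefficients c_s(u).\<close>

definition signed_count :: "nat \<Rightarrow> word \<Rightarrow> int" where
  "signed_count t w = (\<Sum>x\<leftarrow>w. if fst x = t then snd x else 0)"

lemma signed_count_Nil [simp]: "signed_count t [] = 0"
  and signed_count_Cons [simp]:
    "signed_count t (x # w) = (if fst x = t then snd x else 0) + signed_count t w"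
  and signed_count_append [simp]: "signed_count t (u @ v) = signed_count t u + signed_count t v"
  by (simp_all add: signed_count_def)

lemma signed_count_conv_sum_nth:
  "signed_count t w = (\<Sum>q<length w. if fst (w ! q) = t then snd (w ! q) else 0)"
  by (induction w) (simp_all add: sum.lessThan_Suc_shift del: sum.lessThan_Suc cong: if_cong)

lemma signed_count_rotate [simp]: "signed_count t (rotate d w) = signed_count t w"
  by (metis append_take_drop_id signed_count_append add.commute rotate_drop_take)

lemma lk_eq_signed_count: "lk ws i r = signed_count i (ws r)"
  by (simp add: lk_def signed_count_def)

lemma e_rs_Nil [simp]: "e_rs r t [] = 0"
  by (simp add: e_rs_def)

lemma e_rs_Cons: "e_rs r t (x # w) = (if fst x = r then snd x * signed_count t w else 0) + e_rs r t w"
  unfolding e_rs_def signed_count_conv_sum_nth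
  by (simp add: sum.lessThan_Suc_shift sum_distrib_left if_distrib del: sum.lessThan_Suc cong: if_cong)

lemma e_rs_append:
  "e_rs r t (u @ v) = e_rs r t u + e_rs r t v + signed_count r u * signed_count t v"
  by (induction u) (auto simp: e_rs_Cons algebra_simps)

lemma e_rs_append_swap:
  "e_rs r t (v @ u) - e_rs r t (u @ v) =
    signed_count t u * signed_count r (u @ v) - signed_count r u * signed_count t (u @ v)"
  by (simp add: e_rs_append algebra_simps)

lemma e_rs_rotate:
  fixes d :: nat and w :: word
  defines "u \<equiv> take (d mod length w) w"
  shows "e_rs r t (rotate d w) - e_rs r t w =
    signed_count t u * signed_count r w - signed_count r u * signed_count t w"
  using e_rs_append_swap[of r t "drop (d mod length w) w" u]
  by (simp add: u_def rotate_drop_take)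

lemma triple_eq_increasing_cases:
  fixes a b c i j k :: "'a::linorder"
  assumes "a < b" "b < c" "{i, j, k} = {a, b, c}"
  shows "(i, j, k) \<in> {(a, b, c), (b, c, a), (c, a, b), (a, c, b), (b, a, c), (c, b, a)}"
proof -
  have "i \<in> {a, b, c}" "j \<in> {a, b, c}" "k \<in> {a, b, c}"
    and "a \<in> {i, j, k}" "b \<in> {i, j, k}" "c \<in> {i, j, k}"
    using assms(3) by blast+
  with assms(1,2) show ?thesis by auto
qed

lemma X3_increasing:
  assumes "a < b" "b < c"
  shows "X3 i j k a b c =
    (if (i, j, k) \<in> {(a, b, c), (b, c, a), (c, a, b)} then 1
     else if (i, j, k) \<in> {(a, c, b), (b, a, c), (c, b, a)} then -1
     else 0)"
proof (cases "{i, j, k} = {a, b, c}")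
  case True
  from triple_eq_increasing_cases[OF assms True] assms show ?thesis
    unfolding X3_def by (auto simp: sgn_mult insert_commute)
next
  case False
  with assms show ?thesis
    unfolding X3_def by (auto simp: insert_commute)
qed

lemma X3_not_increasing: "\<not> (a < b \<and> b < c) \<Longrightarrow> X3 i j k a b c = 0"
  unfolding X3_def by auto

lemma sum_delta_triple:
  fixes v :: "'a::comm_monoid_add"
  assumes "finite A"
  shows "(\<Sum>x\<in>A. \<Sum>y\<in>A. \<Sum>z\<in>A. if x = p \<and> y = q \<and> z = r then v else 0) =
    (if p \<in> A \<and> q \<in> A \<and> r \<in> A then v else 0)"
proof -
  have "(\<Sum>x\<in>A. \<Sum>y\<in>A. \<Sum>z\<in>A. if (x, y, z) = t then v else 0) = (if t \<in> A \<times> A \<times> A then v else 0)"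
    for t
    using assms by (simp add: sum.cartesian_product case_prod_unfold)
  from this[of "(p, q, r)"] show ?thesis by simp
qed

lemma mvec_increasing:
  assumes "a < b" "b < c"
  shows "mvec n ws a b c = (if (a, b, c) \<in> {1..n} \<times> {1..n} \<times> {1..n} then m_ijk ws a b c else 0)"
proof -
  have "(if i < j \<and> j < k then m_ijk ws i j k * X3 i j k a b c else 0)
      = (if (i, j, k) = (a, b, c) then m_ijk ws a b c else 0)" for i j k
    using assms by (auto simp: X3_increasing)
  then show ?thesis
    unfolding mvec_def by (simp add: sum_delta_triple)
qed

text \<open>The X^[abc]-coefficient of the sum of coef s r * v_{s,r}, for a < b < c.\<close>

definition vsr_combination_coeff :: "(nat \<Rightarrow> nat \<Rightarrow> int) \<Rightarrow> (nat \<Rightarrow> word) \<Rightarrow> nat \<Rightarrow> nat \<Rightarrow> nat \<Rightarrow> int"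
  where "vsr_combination_coeff coef ws a b c =
      coef b c * lk ws a c - coef c b * lk ws a b - coef a c * lk ws b c
      + coef c a * lk ws b a + coef a b * lk ws c b - coef b a * lk ws c a"

lemma sum_vsr_increasing:
  assumes "a < b" "b < c"
  shows "(\<Sum>s\<in>{1..n}. \<Sum>r\<in>{1..n}. if s \<noteq> r then coef s r * vsr n ws s r a b c else 0) =
    (if (a, b, c) \<in> {1..n} \<times> {1..n} \<times> {1..n} then vsr_combination_coeff coef ws a b c else 0)"
proof -
  let ?A = "{1..n::nat}"
  let ?\<delta> = "\<lambda>p q v. if p = q then v else (0::int)"
  have "(if s \<noteq> r then coef s r * (lk ws i r * X3 i s r a b c) else 0) =
      ?\<delta> (s, r, i) (b, c, a) (coef b c * lk ws a c) - ?\<delta> (s, r, i) (c, b, a) (coef c b * lk ws a b)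
    - ?\<delta> (s, r, i) (a, c, b) (coef a c * lk ws b c) + ?\<delta> (s, r, i) (c, a, b) (coef c a * lk ws b a)
    + ?\<delta> (s, r, i) (a, b, c) (coef a b * lk ws c b) - ?\<delta> (s, r, i) (b, a, c) (coef b a * lk ws c a)"
    for s r i
    using assms by (auto simp: X3_increasing)
  moreover have "(if s \<noteq> r then coef s r * vsr n ws s r a b c else 0) =
      (\<Sum>i\<in>?A. if s \<noteq> r then coef s r * (lk ws i r * X3 i s r a b c) else 0)" for s r
    by (cases "s = r") (simp_all add: vsr_def sum_distrib_left)
  ultimately have "(\<Sum>s\<in>?A. \<Sum>r\<in>?A. if s \<noteq> r then coef s r * vsr n ws s r a b c else 0) =
      (\<Sum>s\<in>?A. \<Sum>r\<in>?A. \<Sum>i\<in>?A.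
        ?\<delta> (s, r, i) (b, c, a) (coef b c * lk ws a c) - ?\<delta> (s, r, i) (c, b, a) (coef c b * lk ws a b)
      - ?\<delta> (s, r, i) (a, c, b) (coef a c * lk ws b c) + ?\<delta> (s, r, i) (c, a, b) (coef c a * lk ws b a)
      + ?\<delta> (s, r, i) (a, b, c) (coef a b * lk ws c b) - ?\<delta> (s, r, i) (b, a, c) (coef b a * lk ws c a))"
    by simp
  also have "\<dots> = (if (a, b, c) \<in> ?A \<times> ?A \<times> ?A then vsr_combination_coeff coef ws a b c else 0)"
    by (simp add: sum.distrib sum_subtractf sum_delta_triple vsr_combination_coeff_def)
  finally show ?thesis .
qed

lemma m_ijk_rotate:
  fixes ws :: "nat \<Rightarrow> word" and d :: "nat \<Rightarrow> nat"
  defines "coef s r \<equiv> signed_count s (take (d r mod length (ws r)) (ws r))"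
  shows "m_ijk (\<lambda>k. rotate (d k) (ws k)) a b c - m_ijk ws a b c = vsr_combination_coeff coef ws a b c"
proof -
  have "e_rs x y (rotate (d k) (ws k)) - e_rs x y (ws k) = coef y k * lk ws x k - coef x k * lk ws y k"
    for x y k
    unfolding coef_def lk_eq_signed_count by (rule e_rs_rotate)
  from this[of a b c] this[of b c a] this[of c a b] show ?thesis
    unfolding m_ijk_def vsr_combination_coeff_def by (simp add: algebra_simps)
qed

theorem lemma5p6:
  fixes n :: nat and ws :: "nat \<Rightarrow> (nat \<times> int) list" and d :: "nat \<Rightarrow> nat"
  assumes "wf_words n ws"
    and "\<forall>i\<in>{1..n}. \<forall>r\<in>{1..n}. i \<noteq> r \<longrightarrow> lk ws i r = lk ws r i"
  shows "\<exists>coef :: nat \<Rightarrow> nat \<Rightarrow> int. \<forall>a b c.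
    mvec n (\<lambda>k. rotate (d k) (ws k)) a b c - mvec n ws a b c =
    (\<Sum>s\<in>{1..n}. \<Sum>r\<in>{1..n}. if s \<noteq> r then coef s r * vsr n ws s r a b c else 0)"
proof -
  \<comment> \<open>The coefficient
    coef s r is the signed number of crossings with Sigma_s on the arc of K_r swept by its base point.\<close>
  define coef where "coef s r = signed_count s (take (d r mod length (ws r)) (ws r))" for s r
  have "mvec n (\<lambda>k. rotate (d k) (ws k)) a b c - mvec n ws a b c =
    (\<Sum>s\<in>{1..n}. \<Sum>r\<in>{1..n}. if s \<noteq> r then coef s r * vsr n ws s r a b c else 0)" for a b c
  proof (cases "a < b \<and> b < c")
    case True
    then have "a < b" "b < c" by simp_all
    show ?thesis
      unfolding mvec_increasing[OF \<open>a < b\<close> \<open>b < c\<close>] sum_vsr_increasing[OF \<open>a < b\<close> \<open>b < c\<close>]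
      by (simp add: m_ijk_rotate coef_def)
  next
    case False
    show ?thesis
      unfolding mvec_def vsr_def X3_not_increasing[OF False]
      by (simp only: mult_zero_right if_cancel sum.neutral_const diff_zero)
  qed
  then show ?thesis by blast
qed

end
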